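(* Let $p\in(0,1)$, $\beta\in\mathbb{R}$, $l\ge1$ and $1\le n\le l$ be fixed, let $\theta=0$ and $\alpha=\frac{k}{3^n}$ with $k\in\{0,\dots,3^n-1\}$. There exist functions $\phi_{p,\beta,\frac{k}{3^n},0}$ and $\psi_{p,\beta,\frac{k}{3^n},0}$ such that $H^{(l)}_{p,\beta,\frac{k}{3^n},0}$ is spectrally similar to $\Delta^{(l-n)}_p$ with respect to $\phi_{p,\beta,\frac{k}{3^n},0}$ and $\psi_{p,\beta,\frac{k}{3^n},0}$.
   Context: For $x\in\mathbb{Z}_+\setminus\{0\}$ let $m(x)$ be the largest integer $m\ge0$ with $3^m\mid x$. For $x\ge1$ set $p(x,x-1)=1-p,\ p(x,x+1)=p$ if $3^{-m(x)}x\equiv1\pmod3$, and $p(x,x-1)=p,\ p(x,x+1)=1-p$ if $3^{-m(x)}x\equiv2\pmod3$. Let $V_l=\{0,1,\dots,3^l\}$. The operator $H^{(l)}_{p,\beta,\alpha,\theta}$ acts on $f:V_l\to\mathbb{C}$ by $(H^{(l)}f)(0)=\beta\cos(\theta)f(0)-f(1)$, $(H^{(l)}f)(3^l)=\beta\cos(2\pi\alpha3^l+\theta)f(3^l)-f(3^l-1)$, and for $1\le x\le3^l-1$: $(H^{(l)}f)(x)=\beta\cos(2\pi\alpha x+\theta)f(x)-p(x,x-1)f(x-1)-p(x,x+1)f(x+1)$. The Laplacian $\Delta^{(j)}_p$ on $V_j$ is $(\Delta^{(j)}_pf)(0)=f(0)-f(1)$, $(\Delta^{(j)}_pf)(x)=f(x)-p(x,x-1)f(x-1)-p(x,x+1)f(x+1)$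 for $1\le x\le3^j-1$, $(\Delta^{(j)}_pf)(3^j)=f(3^j)-f(3^j-1)$. Spectral similarity: given Hilbert spaces $\mathcal{H}_0,\mathcal{H}$, an isometry $U:\mathcal{H}_0\to\mathcal{H}$ and bounded operators $H$ on $\mathcal{H}$, $H_0$ on $\mathcal{H}_0$, $H$ is spectrally similar to $H_0$ with functions $\phi,\psi$ if $U^*(H-z)^{-1}U=(\phi(z)H_0-\psi(z))^{-1}$ for all $z\in\mathbb{C}$ for which both sides are defined. Here $\mathcal{H}=\mathbb{C}^{V_l}$, $\mathcal{H}_0=\mathrm{span}\{\delta_v: v\equiv0 \pmod{3^n}\}\subset\mathcal{H}$ identified with $\mathbb{C}^{V_{l-n}}$ via $v\mapsto v/3^n$, and $U$ is the inclusion. *)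

theory Defs
  imports "Jordan_Normal_Form.Matrix" Complex_Main
begin

definition m3 :: "nat \<Rightarrow> nat" where
  "m3 x = (GREATEST m. (3::nat) ^ m dvd x)"

(* transition probabilities p(x,x-1), p(x,x+1) for x \<ge> 1 *)
definition pleft :: "real \<Rightarrow> nat \<Rightarrow> real" where
  "pleft p x = (if (x div 3 ^ m3 x) mod 3 = 1 then 1 - p else p)"

definition pright :: "real \<Rightarrow> nat \<Rightarrow> real" where
  "pright p x = (if (x div 3 ^ m3 x) mod 3 = 1 then p else 1 - p)"

(* The operator H^{(l)}_{p,beta,alpha,theta} on C^{V_l}, V_l = {0..3^l}, as a matrix
   indexed by 0..3^l (row x, column y) *)
definition Hmat :: "real \<Rightarrow> real \<Rightarrow> real \<Rightarrow> real \<Rightarrow> nat \<Rightarrow> complex mat" where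
  "Hmat p \<beta> \<alpha> \<theta> l = mat (3^l + 1) (3^l + 1) (\<lambda>(x, y).
     (if x = y then complex_of_real (\<beta> * cos (2 * pi * \<alpha> * real x + \<theta>)) else 0)
     - (if x = 0 then (if y = 1 then 1 else 0)
        else if x = 3^l then (if y = 3^l - 1 then 1 else 0)
        else (if y = x - 1 then complex_of_real (pleft p x)
              else if y = x + 1 then complex_of_real (pright p x) else 0)))"

definition Lapmat :: "real \<Rightarrow> nat \<Rightarrow> complex mat" where
  "Lapmat p j = mat (3^j + 1) (3^j + 1) (\<lambda>(x, y).
     (if x = y then 1 else 0)
     - (if x = 0 then (if y = 1 then 1 else 0)
        else if x = 3^j then (if y = 3^j - 1 then 1 else 0)
        else (if y = x - 1 then complex_of_real (pleft p x)
              else if y = x + 1 then complex_of_real (pright p x) else 0)))"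

definition Umat :: "nat \<Rightarrow> nat \<Rightarrow> complex mat" where
  "Umat l n = mat (3^l + 1) (3^(l-n) + 1) (\<lambda>(x, v). if x = 3^n * v then 1 else 0)"

definition adj :: "complex mat \<Rightarrow> complex mat" where
  "adj A = map_mat cnj (transpose_mat A)"

definition minv :: "complex mat \<Rightarrow> complex mat" where
  "minv A = (SOME B. inverts_mat A B \<and> inverts_mat B A)"

(* To exclude the degenerate choice making the right-hand side nowhere defined,
   we also require that the right side is defined at all but finitely many z
   at which the left side is defined. *)
definition spectrally_similar ::
  "complex mat \<Rightarrow> complex mat \<Rightarrow> complex mat \<Rightarrow> (complex \<Rightarrow> complex) \<Rightarrow> (complex \<Rightarrow> complex) \<Rightarrow> bool" where
  "spectrally_similar H H0 U \<phi> \<psi> \<longleftrightarrow>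
     (\<forall>z. invertible_mat (H - z \<cdot>\<^sub>m 1\<^sub>m (dim_row H)) \<and>
          invertible_mat (\<phi> z \<cdot>\<^sub>m H0 - \<psi> z \<cdot>\<^sub>m 1\<^sub>m (dim_row H0)) \<longrightarrow>
          adj U * minv (H - z \<cdot>\<^sub>m 1\<^sub>m (dim_row H)) * U
            = minv (\<phi> z \<cdot>\<^sub>m H0 - \<psi> z \<cdot>\<^sub>m 1\<^sub>m (dim_row H0)))
   \<and> finite {z. invertible_mat (H - z \<cdot>\<^sub>m 1\<^sub>m (dim_row H)) \<and>
              \<not> invertible_mat (\<phi> z \<cdot>\<^sub>m H0 - \<psi> z \<cdot>\<^sub>m 1\<^sub>m (dim_row H0))}"

end

theory Submission
  imports Defs "Jordan_Normal_Form.Determinant" "HOL-Library.Periodic_Fun"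
begin

(* Put N = 3^n and M = 3^(l-n), so that V_l = {0..N*M} is a chain of M cells of length N whose
   endpoints form the coarse copy N * V_(l-n) of V_(l-n). For alpha = k/3^n the potential is
   N-periodic and symmetric inside every cell; the transition probabilities are N-periodic off the
   coarse lattice, reflection symmetric inside a cell, and on the lattice p(3^n j, .) = p(j, .).
   Unless z is a Dirichlet eigenvalue of a single cell (a zero of a polynomial), every function g on
   the coarse lattice extends uniquely to a function E g that solves (H - z) f = 0 inside each cell.
   Evaluating (H - z) E g at the lattice points gives U (phi(z) Delta - psi(z)) g, where phi and psi
   are read off from the Dirichlet solutions of one cell at the point 1. Since U^* E = I, this
   yields U^* (H - z)^-1 U = (phi(z) Delta - psi(z))^-1. *)

section \<open>Tridiagonal operators on a chain\<close>

definition tridiag_op ::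
  "nat \<Rightarrow> (nat \<Rightarrow> 'a) \<Rightarrow> (nat \<Rightarrow> 'a) \<Rightarrow> (nat \<Rightarrow> 'a) \<Rightarrow> (nat \<Rightarrow> 'a) \<Rightarrow> nat \<Rightarrow> 'a :: comm_ring_1"
  where "tridiag_op n d L R f x = d x * f x
    - (if x = 0 then f 1 else if x = n then f (n - 1) else L x * f (x - 1) + R x * f (x + 1))"

definition tridiag_mat ::
  "nat \<Rightarrow> (nat \<Rightarrow> 'a) \<Rightarrow> (nat \<Rightarrow> 'a) \<Rightarrow> (nat \<Rightarrow> 'a) \<Rightarrow> 'a :: comm_ring_1 mat"
  where "tridiag_mat n d L R =
    mat (n + 1) (n + 1) (\<lambda>(x, y). tridiag_op n d L R (\<lambda>w. of_bool (w = y)) x)"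

lemma tridiag_mat_dim [simp]:
  "dim_row (tridiag_mat n d L R) = n + 1" "dim_col (tridiag_mat n d L R) = n + 1"
  by (simp_all add: tridiag_mat_def)

lemma tridiag_mat_carrier: "tridiag_mat n d L R \<in> carrier_mat (n + 1) (n + 1)"
  by (simp add: tridiag_mat_def)

lemma tridiag_op_cong:
  assumes "0 < n" "x \<le> n" "\<And>y. y \<le> n \<Longrightarrow> f y = g y"
  shows "tridiag_op n d L R f x = tridiag_op n d L R g x"
  using assms by (simp add: tridiag_op_def)

lemma tridiag_op_sum:
  "tridiag_op n d L R (\<lambda>w. \<Sum>y\<in>A. c y * g y w) x = (\<Sum>y\<in>A. c y * tridiag_op n d L R (g y) x)"
  by (simp add: tridiag_op_def sum_subtractf sum.distrib sum_distrib_left algebra_simps)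

lemma tridiag_mat_mult_index:
  assumes B: "B \<in> carrier_mat (n + 1) m" and "0 < n" "x \<le> n" "v < m"
    and f: "\<And>y. y \<le> n \<Longrightarrow> B $$ (y, v) = f y"
  shows "(tridiag_mat n d L R * B) $$ (x, v) = tridiag_op n d L R f x"
proof -
  have "(tridiag_mat n d L R * B) $$ (x, v) = row (tridiag_mat n d L R) x \<bullet> col B v"
    using assms(1,3,4) by (intro index_mult_mat) auto
  also have "\<dots> = (\<Sum>y<n + 1. tridiag_mat n d L R $$ (x, y) * B $$ (y, v))"
    using assms(1,3,4) by (simp add: scalar_prod_def atLeast0LessThan)
  also have "\<dots> = (\<Sum>y<n + 1. f y * tridiag_op n d L R (\<lambda>w. of_bool (w = y)) x)"
    using assms by (intro sum.cong) (auto simp: tridiag_mat_def)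
  also have "\<dots> = tridiag_op n d L R (\<lambda>w. \<Sum>y<n + 1. f y * of_bool (w = y)) x"
    by (simp only: tridiag_op_sum)
  also have "\<dots> = tridiag_op n d L R f x"
    using assms by (intro tridiag_op_cong) (auto simp: Int_insert_right simp del: sum.lessThan_Suc)
  finally show ?thesis .
qed

lemma tridiag_mat_minus_scalar:
  "tridiag_mat n d L R - z \<cdot>\<^sub>m 1\<^sub>m (n + 1) = tridiag_mat n (\<lambda>x. d x - z) L R"
  by (rule eq_matI) (auto simp: tridiag_mat_def tridiag_op_def algebra_simps)

definition embed_mat :: "nat \<Rightarrow> nat \<Rightarrow> 'a :: comm_ring_1 mat" where
  "embed_mat N M = mat (N * M + 1) (M + 1) (\<lambda>(x, v). of_bool (x = N * v))"

lemma embed_mat_dim [simp]: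
  "dim_row (embed_mat N M) = N * M + 1" "dim_col (embed_mat N M) = M + 1"
  by (simp_all add: embed_mat_def)

lemma embed_mat_carrier: "embed_mat N M \<in> carrier_mat (N * M + 1) (M + 1)"
  by (simp add: embed_mat_def)

lemma embed_mat_mult_index:
  assumes S: "S \<in> carrier_mat (M + 1) m" and "0 < N" "x \<le> N * M" "v < m"
  shows "(embed_mat N M * S) $$ (x, v) = (if N dvd x then S $$ (x div N, v) else 0)"
proof -
  have "(embed_mat N M * S) $$ (x, v) = (\<Sum>w<M + 1. of_bool (x = N * w) * S $$ (w, v))"
    using assms by (simp add: scalar_prod_def atLeast0LessThan embed_mat_def)
  also have "\<dots> = (if N dvd x then S $$ (x div N, v) else 0)"
  proof (cases "N dvd x")
    case True
    then obtain c where c: "x = N * c" ..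
    with assms have "c < M + 1"
      by simp
    have "(\<Sum>w<M + 1. of_bool (x = N * w) * S $$ (w, v)) = (\<Sum>w<M + 1. of_bool (w = c) * S $$ (w, v))"
      using \<open>0 < N\<close> c by (intro sum.cong) auto
    also have "\<dots> = S $$ (c, v)"
      using \<open>c < M + 1\<close> by (simp add: Int_insert_right del: sum.lessThan_Suc)
    finally show ?thesis
      using True c \<open>0 < N\<close> by simp
  next
    case False
    then have "x \<noteq> N * w" for w
      by auto
    with False show ?thesis
      by simp
  qed
  finally show ?thesis .
qed

lemma cnj_of_bool [simp]: "cnj (of_bool b) = of_bool b"
  by (cases b) simp_all

lemma adj_embed_mat_mult_index:
  assumes E: "E \<in> carrier_mat (N * M + 1) m" and "w \<le> M" "v < m"
  shows "(adj (embed_mat N M) * E) $$ (w, v) = E $$ (N * w, v)"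
proof -
  have "N * w < N * M + 1"
    using assms by (simp add: le_imp_less_Suc)
  have "(adj (embed_mat N M) * E) $$ (w, v) = (\<Sum>x<N * M + 1. of_bool (x = N * w) * E $$ (x, v))"
    using assms
    by (simp add: scalar_prod_def atLeast0LessThan embed_mat_def adj_def del: sum.lessThan_Suc)
  also have "\<dots> = E $$ (N * w, v)"
    using \<open>N * w < N * M + 1\<close> by (simp add: Int_insert_right del: sum.lessThan_Suc)
  finally show ?thesis .
qed

section \<open>Inverses and spectral similarity\<close>

lemma minv_inverse:
  assumes "invertible_mat A" "A \<in> carrier_mat n n"
  shows "minv A \<in> carrier_mat n n" "A * minv A = 1\<^sub>m n" "minv A * A = 1\<^sub>m n"
proof -
  have "\<exists>B. inverts_mat A B \<and> inverts_mat B A"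
    using assms(1) unfolding invertible_mat_def by blast
  then have "inverts_mat A (minv A) \<and> inverts_mat (minv A) A"
    unfolding minv_def by (rule someI_ex)
  then have AB: "A * minv A = 1\<^sub>m n" and BA: "minv A * A = 1\<^sub>m (dim_row (minv A))"
    using assms(2) unfolding inverts_mat_def by auto
  from arg_cong[OF AB, of dim_col] arg_cong[OF BA, of dim_col] assms(2)
  show "minv A \<in> carrier_mat n n"
    by auto
  with AB BA show "A * minv A = 1\<^sub>m n" "minv A * A = 1\<^sub>m n"
    by auto
qed

lemma left_inverse_imp_minv:
  assumes S: "S \<in> carrier_mat n n" and T: "T \<in> carrier_mat n n" and TS: "T * S = 1\<^sub>m n"
  shows "invertible_mat S" "minv S = T"
proof -
  have ST: "S * T = 1\<^sub>m n"
    by (rule mat_mult_left_right_inverse[OF T S TS])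
  show inv: "invertible_mat S"
    unfolding invertible_mat_def inverts_mat_def using S T ST TS by auto
  note minv_S = minv_inverse[OF inv S]
  have "minv S = minv S * (S * T)"
    using minv_S by (simp add: ST)
  also have "\<dots> = (minv S * S) * T"
    using assoc_mult_mat[OF minv_S(1) S T] by simp
  also have "\<dots> = T"
    using minv_S T by simp
  finally show "minv S = T" .
qed

lemma zero_mat_not_invertible:
  assumes "0 < n"
  shows "\<not> invertible_mat (0\<^sub>m n n :: complex mat)"
proof
  assume "invertible_mat (0\<^sub>m n n :: complex mat)"
  from minv_inverse[OF this zero_carrier_mat]
  have "(0\<^sub>m n n :: complex mat) = 1\<^sub>m n"
    by simp
  then have "(0\<^sub>m n n :: complex mat) $$ (0, 0) = 1\<^sub>m n $$ (0, 0)"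
    by simp
  with assms show False
    by simp
qed

lemma compressed_inverse:
  assumes A: "A \<in> carrier_mat n n" "invertible_mat A"
    and E: "E \<in> carrier_mat n m" and U: "U \<in> carrier_mat n m"
    and S: "S \<in> carrier_mat m m" and P: "P \<in> carrier_mat m n"
    and AE: "A * E = U * S" and PE: "P * E = 1\<^sub>m m"
  shows "invertible_mat S" "minv S = P * minv A * U"
proof -
  note minv_A = minv_inverse[OF A(2,1)]
  have "E = minv A * (U * S)"
  proof -
    have "E = (minv A * A) * E"
      using minv_A E by simp
    also have "\<dots> = minv A * (U * S)"
      using assoc_mult_mat[OF minv_A(1) A(1) E] by (simp add: AE)
    finally show ?thesis .
  qed
  have PA: "P * minv A \<in> carrier_mat m n"
    using P minv_A(1) by simp
  have "(P * minv A * U) * S = (P * minv A) * (U * S)"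
    by (rule assoc_mult_mat[OF PA U S])
  also have "\<dots> = P * (minv A * (U * S))"
    by (rule assoc_mult_mat[OF P minv_A(1) mult_carrier_mat[OF U S]])
  also have "\<dots> = 1\<^sub>m m"
    by (simp flip: \<open>E = minv A * (U * S)\<close> add: PE)
  finally have "(P * minv A * U) * S = 1\<^sub>m m" .
  moreover have "P * minv A * U \<in> carrier_mat m m"
    using P minv_A(1) U by simp
  ultimately show "invertible_mat S" "minv S = P * minv A * U"
    using left_inverse_imp_minv[OF S] by auto
qed

lemma spectrally_similarI:
  assumes H: "H \<in> carrier_mat n n" and H0: "H0 \<in> carrier_mat m m" and "0 < m"
    and Z: "finite Z" "\<And>z. z \<in> Z \<Longrightarrow> \<phi> z = 0 \<and> \<psi> z = 0"
    and resolvent: "\<And>z. z \<notin> Z \<Longrightarrow> invertible_mat (H - z \<cdot>\<^sub>m 1\<^sub>m n) \<Longrightarrow>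
      invertible_mat (\<phi> z \<cdot>\<^sub>m H0 - \<psi> z \<cdot>\<^sub>m 1\<^sub>m m) \<and>
      minv (\<phi> z \<cdot>\<^sub>m H0 - \<psi> z \<cdot>\<^sub>m 1\<^sub>m m) = adj U * minv (H - z \<cdot>\<^sub>m 1\<^sub>m n) * U"
  shows "spectrally_similar H H0 U \<phi> \<psi>"
proof -
  have singular: "\<not> invertible_mat (\<phi> z \<cdot>\<^sub>m H0 - \<psi> z \<cdot>\<^sub>m 1\<^sub>m m)" if "z \<in> Z" for z
  proof -
    have "\<phi> z \<cdot>\<^sub>m H0 - \<psi> z \<cdot>\<^sub>m 1\<^sub>m m = 0\<^sub>m m m"
      using Z(2)[OF that] H0 by (intro eq_matI) auto
    then show ?thesis
      using zero_mat_not_invertible[OF \<open>0 < m\<close>] by simp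
  qed
  then have "{z. invertible_mat (H - z \<cdot>\<^sub>m 1\<^sub>m n) \<and>
      \<not> invertible_mat (\<phi> z \<cdot>\<^sub>m H0 - \<psi> z \<cdot>\<^sub>m 1\<^sub>m m)} \<subseteq> Z"
    using resolvent by blast
  with Z(1) have finite: "finite {z. invertible_mat (H - z \<cdot>\<^sub>m 1\<^sub>m n) \<and>
      \<not> invertible_mat (\<phi> z \<cdot>\<^sub>m H0 - \<psi> z \<cdot>\<^sub>m 1\<^sub>m m)}"
    by (rule finite_subset[rotated])
  have dims: "dim_row H = n" "dim_row H0 = m"
    using H H0 by auto
  show ?thesis
    unfolding spectrally_similar_def dims
  proof (intro conjI allI impI finite)
    fix z
    assume invertible: "invertible_mat (H - z \<cdot>\<^sub>m 1\<^sub>m n) \<and>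
      invertible_mat (\<phi> z \<cdot>\<^sub>m H0 - \<psi> z \<cdot>\<^sub>m 1\<^sub>m m)"
    then have "z \<notin> Z"
      using singular by blast
    with invertible resolvent
    show "adj U * minv (H - z \<cdot>\<^sub>m 1\<^sub>m n) * U = minv (\<phi> z \<cdot>\<^sub>m H0 - \<psi> z \<cdot>\<^sub>m 1\<^sub>m m)"
      by simp
  qed
qed

section \<open>Decimation of a self-similar chain\<close>

fun recur_poly :: "(nat \<Rightarrow> 'a) \<Rightarrow> (nat \<Rightarrow> 'a) \<Rightarrow> (nat \<Rightarrow> 'a) \<Rightarrow> nat \<Rightarrow> 'a :: field poly" where
  "recur_poly V L R 0 = 0"
| "recur_poly V L R (Suc 0) = 1"
| "recur_poly V L R (Suc (Suc r)) = smult (inverse (R (Suc r)))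
     ([:V (Suc r), -1:] * recur_poly V L R (Suc r) - smult (L (Suc r)) (recur_poly V L R r))"

declare recur_poly.simps(3) [simp del]

lemma poly_recur_poly:
  assumes "R r \<noteq> 0" "0 < r"
  shows "(V r - z) * poly (recur_poly V L R r) z
    = L r * poly (recur_poly V L R (r - 1)) z + R r * poly (recur_poly V L R (r + 1)) z"
proof -
  obtain r' where r: "r = Suc r'"
    using assms(2) by (cases r) auto
  show ?thesis
    using assms(1) unfolding r by (simp add: recur_poly.simps(3) field_simps)
qed

lemma recur_poly_degree:
  assumes "\<And>r. R r \<noteq> 0"
  shows "recur_poly V L R (Suc r) \<noteq> 0 \<and> degree (recur_poly V L R (Suc r)) = r"
proof -
  have "(recur_poly V L R (Suc r) \<noteq> 0 \<and> degree (recur_poly V L R (Suc r)) = r) \<and>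
        (recur_poly V L R (Suc (Suc r)) \<noteq> 0 \<and> degree (recur_poly V L R (Suc (Suc r))) = Suc r)"
  proof (induction r)
    case 0
    then show ?case
      using assms[of 1] by (simp add: recur_poly.simps(3))
  next
    case (Suc r)
    let ?Q = "[:V (Suc (Suc r)), -1:] * recur_poly V L R (Suc (Suc r))"
    let ?X = "smult (L (Suc (Suc r))) (recur_poly V L R (Suc r))"
    have "degree ?Q = Suc (Suc r)"
      using Suc.IH by (subst degree_mult_eq) auto
    moreover have "degree ?X < degree ?Q"
      using Suc.IH \<open>degree ?Q = Suc (Suc r)\<close> by simp
    ultimately have "degree (?Q - ?X) = Suc (Suc r)"
      using degree_add_eq_left[of "- ?X" ?Q] by simp
    then have "?Q - ?X \<noteq> 0"
      by (metis Zero_not_Suc degree_0)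
    with Suc.IH \<open>degree (?Q - ?X) = Suc (Suc r)\<close> assms[of "Suc (Suc r)"] show ?case
      by (simp add: recur_poly.simps(3)[of V L R "Suc r"])
  qed
  then show ?thesis
    by blast
qed

locale self_similar_chain =
  fixes N M :: nat and V L R :: "nat \<Rightarrow> complex"
  assumes cell_pos: "0 < N" and coarse_pos: "0 < M"
    and V_periodic: "\<And>j r. V (N * j + r) = V r"
    and V_reflect: "\<And>r. 0 < r \<Longrightarrow> r < N \<Longrightarrow> V (N - r) = V r"
    and L_periodic: "\<And>j r. 0 < r \<Longrightarrow> r < N \<Longrightarrow> L (N * j + r) = L r"
    and L_scale: "\<And>j. 0 < j \<Longrightarrow> L (N * j) = L j"
    and L_reflect: "\<And>r. 0 < r \<Longrightarrow> r < N \<Longrightarrow> L (N - r) = R r"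
    and L_plus_R: "\<And>x. L x + R x = 1"
    and R_nonzero: "\<And>x. R x \<noteq> 0"
begin

lemma R_eq: "R x = 1 - L x"
  using L_plus_R[of x] by (metis add_diff_cancel_left')

lemma R_periodic: "0 < r \<Longrightarrow> r < N \<Longrightarrow> R (N * j + r) = R r"
  by (simp add: R_eq L_periodic)

lemma R_scale: "0 < j \<Longrightarrow> R (N * j) = R j"
  by (simp add: R_eq L_scale)

lemma R_reflect: "0 < r \<Longrightarrow> r < N \<Longrightarrow> R (N - r) = L r"
  by (simp add: R_eq L_reflect)

(* The zeros of cell_det are the Dirichlet eigenvalues of a single cell {0..N}. *)
definition cell_det :: "complex \<Rightarrow> complex" where
  "cell_det z = poly (recur_poly V L R N) z"

definition harmonic_right :: "complex \<Rightarrow> nat \<Rightarrow> complex" where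
  "harmonic_right z r = poly (recur_poly V L R r) z / cell_det z"

(* By the reflection symmetry of a cell, the Dirichlet solution with boundary values 1, 0 is the
   mirror image of the one with boundary values 0, 1. *)
definition harmonic_left :: "complex \<Rightarrow> nat \<Rightarrow> complex" where
  "harmonic_left z r = harmonic_right z (N - r)"

definition harmonic_ext :: "complex \<Rightarrow> (nat \<Rightarrow> complex) \<Rightarrow> nat \<Rightarrow> complex" where
  "harmonic_ext z g x =
    harmonic_left z (x mod N) * g (x div N) + harmonic_right z (x mod N) * g (x div N + 1)"

(* At the finitely many Dirichlet eigenvalues phi and psi are set to 0, making phi z Delta - psi z
   singular there, as the finiteness clause of spectrally_similar permits. *)
definition \<phi> :: "complex \<Rightarrow> complex" where
  "\<phi> z = (if cell_det z = 0 then 0 else harmonic_right z 1)"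

definition \<psi> :: "complex \<Rightarrow> complex" where
  "\<psi> z = (if cell_det z = 0 then 0 else harmonic_left z 1 + harmonic_right z 1 + z - V 0)"

lemma finite_cell_det_roots: "finite {z. cell_det z = 0}"
proof -
  have "recur_poly V L R (Suc (N - 1)) \<noteq> 0"
    using recur_poly_degree[of R] R_nonzero by blast
  then show ?thesis
    unfolding cell_det_def using cell_pos poly_roots_finite by simp
qed

lemma harmonic_right_eq:
  assumes "0 < r"
  shows "(V r - z) * harmonic_right z r
     = L r * harmonic_right z (r - 1) + R r * harmonic_right z (r + 1)"
proof -
  have "(V r - z) * poly (recur_poly V L R r) z / cell_det z
      = (L r * poly (recur_poly V L R (r - 1)) z + R r * poly (recur_poly V L R (r + 1)) z)
        / cell_det z"
    using poly_recur_poly[where V = V and L = L and R = R and z = z, OF R_nonzero assms] by simp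
  then show ?thesis
    by (simp add: harmonic_right_def add_divide_distrib)
qed

lemma harmonic_left_eq:
  assumes "0 < r" "r < N"
  shows "(V r - z) * harmonic_left z r
     = L r * harmonic_left z (r - 1) + R r * harmonic_left z (r + 1)"
proof -
  have "N - r - 1 = N - (r + 1)" "N - r + 1 = N - (r - 1)"
    using assms by auto
  with harmonic_right_eq[of "N - r" z] assms show ?thesis
    by (simp add: harmonic_left_def V_reflect L_reflect R_reflect)
qed

lemma harmonic_boundary:
  assumes "cell_det z \<noteq> 0"
  shows "harmonic_right z 0 = 0" "harmonic_right z N = 1"
    and "harmonic_left z 0 = 1" "harmonic_left z N = 0"
proof -
  show "harmonic_right z 0 = 0" "harmonic_left z N = 0"
    by (simp_all add: harmonic_left_def harmonic_right_def)
  show "harmonic_right z N = 1" "harmonic_left z 0 = 1"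
    using assms by (simp_all add: harmonic_left_def harmonic_right_def cell_det_def)
qed

lemma harmonic_ext_cell:
  assumes "cell_det z \<noteq> 0" "r \<le> N"
  shows "harmonic_ext z g (N * j + r) = harmonic_left z r * g j + harmonic_right z r * g (j + 1)"
proof (cases "r = N")
  case True
  then have "N * j + r = N * (j + 1) + 0"
    by simp
  then show ?thesis
    using True cell_pos harmonic_boundary[OF assms(1)] by (simp add: harmonic_ext_def)
next
  case False
  with assms cell_pos show ?thesis
    by (simp add: harmonic_ext_def)
qed

lemma harmonic_ext_lattice:
  "cell_det z \<noteq> 0 \<Longrightarrow> harmonic_ext z g (N * j) = g j"
  using harmonic_ext_cell[of z 0 g j] harmonic_boundary by simp

lemma harmonic_ext_after_lattice:
  "cell_det z \<noteq> 0 \<Longrightarrow>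
    harmonic_ext z g (N * j + 1) = harmonic_left z 1 * g j + harmonic_right z 1 * g (j + 1)"
  using harmonic_ext_cell[of z 1 g j] cell_pos by simp

lemma harmonic_ext_before_lattice:
  assumes "cell_det z \<noteq> 0" "0 < j"
  shows "harmonic_ext z g (N * j - 1) = harmonic_right z 1 * g (j - 1) + harmonic_left z 1 * g j"
proof -
  have "N * j - 1 = N * (j - 1) + (N - 1)"
    using assms(2) cell_pos by (cases j) auto
  moreover have "harmonic_left z (N - 1) = harmonic_right z 1"
    using cell_pos by (simp add: harmonic_left_def)
  moreover have "harmonic_right z (N - 1) = harmonic_left z 1"
    by (simp add: harmonic_left_def)
  ultimately show ?thesis
    using harmonic_ext_cell[OF assms(1), of "N - 1" g "j - 1"] assms(2) by simp
qed

lemma tridiag_op_harmonic_ext_interior: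
  assumes "cell_det z \<noteq> 0" "0 < r" "r < N"
  shows "tridiag_op (N * M) (\<lambda>x. V x - z) L R (harmonic_ext z g) (N * j + r) = 0"
proof -
  let ?hl = "harmonic_left z" and ?hr = "harmonic_right z"
  have "N * j + r \<noteq> N * M"
    using assms by (metis dvd_add_right_iff dvd_triv_left dvd_imp_le not_less)
  then have "tridiag_op (N * M) (\<lambda>x. V x - z) L R (harmonic_ext z g) (N * j + r)
      = (V (N * j + r) - z) * harmonic_ext z g (N * j + r)
        - (L (N * j + r) * harmonic_ext z g (N * j + (r - 1))
           + R (N * j + r) * harmonic_ext z g (N * j + (r + 1)))"
    using assms(2) by (simp add: tridiag_op_def)
  also have "\<dots> = (V r - z) * (?hl r * g j + ?hr r * g (j + 1))
        - (L r * (?hl (r - 1) * g j + ?hr (r - 1) * g (j + 1))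
           + R r * (?hl (r + 1) * g j + ?hr (r + 1) * g (j + 1)))"
  proof -
    have "r - 1 \<le> N" "r \<le> N" "r + 1 \<le> N"
      using assms by auto
    then show ?thesis
      using assms(2,3)
      by (simp only: harmonic_ext_cell[OF assms(1)] V_periodic L_periodic R_periodic)
  qed
  also have "\<dots> = g j * ((V r - z) * ?hl r - (L r * ?hl (r - 1) + R r * ?hl (r + 1)))
      + g (j + 1) * ((V r - z) * ?hr r - (L r * ?hr (r - 1) + R r * ?hr (r + 1)))"
    by (simp add: algebra_simps)
  also have "\<dots> = 0"
    using assms by (simp add: harmonic_left_eq harmonic_right_eq)
  finally show ?thesis .
qed

lemma tridiag_op_harmonic_ext_lattice:
  assumes "cell_det z \<noteq> 0" "j \<le> M"
  shows "tridiag_op (N * M) (\<lambda>x. V x - z) L R (harmonic_ext z g) (N * j)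
    = \<phi> z * tridiag_op M (\<lambda>_. 1) L R g j - \<psi> z * g j"
proof -
  have coeffs: "\<phi> z = harmonic_right z 1" "\<psi> z = harmonic_left z 1 + harmonic_right z 1 + z - V 0"
    using assms(1) by (simp_all add: \<phi>_def \<psi>_def)
  have V_lattice: "V (N * j) = V 0"
    using V_periodic[of j 0] by simp
  note ext = harmonic_ext_lattice[OF assms(1)] harmonic_ext_after_lattice[OF assms(1)]
    harmonic_ext_before_lattice[OF assms(1)]
  consider "j = 0" | "j = M" | "0 < j" "j < M"
    using assms(2) by linarith
  then show ?thesis
  proof cases
    case 1
    then show ?thesis
      using ext(1,2)[of g 0] coarse_pos by (simp add: tridiag_op_def coeffs algebra_simps)
  next
    case 2
    then show ?thesis
      using ext(1)[of g M] ext(3)[of M g] cell_pos coarse_pos V_lattice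
      by (simp add: tridiag_op_def coeffs algebra_simps)
  next
    case 3
    then have "N * j \<noteq> 0" "N * j \<noteq> N * M"
      using cell_pos by auto
    then show ?thesis
      using 3 ext(1,2)[of g j] ext(3)[of j g] V_lattice
      by (simp add: tridiag_op_def coeffs L_scale R_scale R_eq algebra_simps)
  qed
qed

lemma tridiag_op_harmonic_ext:
  assumes "cell_det z \<noteq> 0" "x \<le> N * M"
  shows "tridiag_op (N * M) (\<lambda>x. V x - z) L R (harmonic_ext z g) x
    = (if N dvd x then \<phi> z * tridiag_op M (\<lambda>_. 1) L R g (x div N) - \<psi> z * g (x div N) else 0)"
proof (cases "N dvd x")
  case True
  then obtain j where j: "x = N * j" ..
  with assms(2) cell_pos have "j \<le> M"
    by simp
  with j cell_pos show ?thesis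
    using tridiag_op_harmonic_ext_lattice[OF assms(1)] by simp
next
  case False
  then have "0 < x mod N" "x mod N < N"
    using cell_pos by (auto simp: dvd_eq_mod_eq_0)
  from tridiag_op_harmonic_ext_interior[OF assms(1) this, of g "x div N"] False show ?thesis
    by simp
qed

definition harmonic_ext_mat :: "complex \<Rightarrow> complex mat" where
  "harmonic_ext_mat z = mat (N * M + 1) (M + 1) (\<lambda>(x, v). harmonic_ext z (\<lambda>w. of_bool (w = v)) x)"

lemma harmonic_ext_mat_carrier: "harmonic_ext_mat z \<in> carrier_mat (N * M + 1) (M + 1)"
  by (simp add: harmonic_ext_mat_def)

lemma tridiag_mult_harmonic_ext_mat:
  assumes "cell_det z \<noteq> 0"
  shows "tridiag_mat (N * M) (\<lambda>x. V x - z) L R * harmonic_ext_mat z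
    = embed_mat N M * (\<phi> z \<cdot>\<^sub>m tridiag_mat M (\<lambda>_. 1) L R - \<psi> z \<cdot>\<^sub>m 1\<^sub>m (M + 1))"
    (is "?A * ?E = ?U * ?S")
proof (rule eq_matI)
  fix x v
  assume "x < dim_row (?U * ?S)" "v < dim_col (?U * ?S)"
  then have x: "x \<le> N * M" and v: "v < M + 1"
    by auto
  have S: "?S \<in> carrier_mat (M + 1) (M + 1)"
    by (intro minus_carrier_mat smult_carrier_mat tridiag_mat_carrier one_carrier_mat)
  have S_index: "?S $$ (j, v)
      = \<phi> z * tridiag_op M (\<lambda>_. 1) L R (\<lambda>w. of_bool (w = v)) j - \<psi> z * of_bool (j = v)"
    if "j \<le> M" for j
    using that v by (simp add: tridiag_mat_def)
  have "(?A * ?E) $$ (x, v)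
      = tridiag_op (N * M) (\<lambda>x. V x - z) L R (harmonic_ext z (\<lambda>w. of_bool (w = v))) x"
    using cell_pos coarse_pos x v harmonic_ext_mat_carrier
    by (intro tridiag_mat_mult_index) (auto simp: harmonic_ext_mat_def)
  also have "\<dots> = (if N dvd x then ?S $$ (x div N, v) else 0)"
  proof -
    have "x div N \<le> M"
      using x cell_pos by (metis div_le_mono nonzero_mult_div_cancel_left not_gr0)
    then show ?thesis
      by (simp only: tridiag_op_harmonic_ext[OF assms x] S_index)
  qed
  also have "\<dots> = (?U * ?S) $$ (x, v)"
    by (rule embed_mat_mult_index[OF S cell_pos x v, symmetric])
  finally show "(?A * ?E) $$ (x, v) = (?U * ?S) $$ (x, v)" .
qed (simp_all add: harmonic_ext_mat_def)

lemma adj_embed_mult_harmonic_ext_mat: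
  assumes "cell_det z \<noteq> 0"
  shows "adj (embed_mat N M) * harmonic_ext_mat z = 1\<^sub>m (M + 1)"
proof (rule eq_matI)
  fix w v
  assume "w < dim_row (1\<^sub>m (M + 1))" "v < dim_col (1\<^sub>m (M + 1) :: complex mat)"
  then have w: "w \<le> M" and v: "v < M + 1"
    by auto
  then have "N * w < N * M + 1"
    by (simp add: le_imp_less_Suc)
  have "(adj (embed_mat N M) * harmonic_ext_mat z) $$ (w, v) = harmonic_ext_mat z $$ (N * w, v)"
    by (rule adj_embed_mat_mult_index[OF harmonic_ext_mat_carrier w v])
  also have "\<dots> = harmonic_ext z (\<lambda>u. of_bool (u = v)) (N * w)"
    using \<open>N * w < N * M + 1\<close> v by (simp add: harmonic_ext_mat_def)
  also have "\<dots> = 1\<^sub>m (M + 1) $$ (w, v)"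
    using w v by (simp add: harmonic_ext_lattice[OF assms])
  finally show "(adj (embed_mat N M) * harmonic_ext_mat z) $$ (w, v) = 1\<^sub>m (M + 1) $$ (w, v)" .
qed (simp_all add: adj_def harmonic_ext_mat_def)

theorem spectrally_similar_decimation:
  "spectrally_similar (tridiag_mat (N * M) V L R) (tridiag_mat M (\<lambda>_. 1) L R) (embed_mat N M) \<phi> \<psi>"
proof (rule spectrally_similarI[OF tridiag_mat_carrier tridiag_mat_carrier _ finite_cell_det_roots])
  show "0 < M + 1"
    by simp
  show "\<phi> z = 0 \<and> \<psi> z = 0" if "z \<in> {z. cell_det z = 0}" for z
    using that by (simp add: \<phi>_def \<psi>_def)
next
  fix z
  assume "z \<notin> {z. cell_det z = 0}"
    and invertible: "invertible_mat (tridiag_mat (N * M) V L R - z \<cdot>\<^sub>m 1\<^sub>m (N * M + 1))"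
  then have "cell_det z \<noteq> 0"
    by simp
  have S: "\<phi> z \<cdot>\<^sub>m tridiag_mat M (\<lambda>_. 1) L R - \<psi> z \<cdot>\<^sub>m 1\<^sub>m (M + 1) \<in> carrier_mat (M + 1) (M + 1)"
    by (intro minus_carrier_mat smult_carrier_mat tridiag_mat_carrier one_carrier_mat)
  have P: "adj (embed_mat N M) \<in> carrier_mat (M + 1) (N * M + 1)"
    by (simp add: adj_def embed_mat_def)
  from compressed_inverse[OF tridiag_mat_carrier invertible[unfolded tridiag_mat_minus_scalar]
      harmonic_ext_mat_carrier embed_mat_carrier S P
      tridiag_mult_harmonic_ext_mat[OF \<open>cell_det z \<noteq> 0\<close>]
      adj_embed_mult_harmonic_ext_mat[OF \<open>cell_det z \<noteq> 0\<close>]]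
  show "invertible_mat (\<phi> z \<cdot>\<^sub>m tridiag_mat M (\<lambda>_. 1) L R - \<psi> z \<cdot>\<^sub>m 1\<^sub>m (M + 1)) \<and>
      minv (\<phi> z \<cdot>\<^sub>m tridiag_mat M (\<lambda>_. 1) L R - \<psi> z \<cdot>\<^sub>m 1\<^sub>m (M + 1))
        = adj (embed_mat N M) * minv (tridiag_mat (N * M) V L R - z \<cdot>\<^sub>m 1\<^sub>m (N * M + 1))
          * embed_mat N M"
    by (simp only: tridiag_mat_minus_scalar)
qed

end

section \<open>The chain V_l\<close>

lemma m3_power_mult:
  assumes "\<not> 3 dvd q"
  shows "m3 (3 ^ m * q) = m"
  unfolding m3_def
proof (rule Greatest_equality)
  fix m' assume "(3::nat) ^ m' dvd 3 ^ m * q"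
  show "m' \<le> m"
  proof (rule ccontr)
    assume "\<not> m' \<le> m"
    then have "(3::nat) ^ Suc m dvd 3 ^ m'"
      by (intro le_imp_power_dvd) simp
    with \<open>3 ^ m' dvd 3 ^ m * q\<close> have "(3::nat) ^ Suc m dvd 3 ^ m * q"
      using dvd_trans by blast
    with assms show False by simp
  qed
qed simp

definition last_ternary_digit :: "nat \<Rightarrow> nat" where
  "last_ternary_digit x = x div 3 ^ m3 x mod 3"

lemma last_ternary_digit_power_mult:
  "\<not> 3 dvd q \<Longrightarrow> last_ternary_digit (3 ^ m * q) = q mod 3"
  by (simp add: last_ternary_digit_def m3_power_mult)

lemma ternary_decomp:
  fixes x :: nat
  assumes "x \<noteq> 0"
  obtains m q where "x = 3 ^ m * q" "\<not> 3 dvd q"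
  using assms
proof (induction x arbitrary: thesis rule: less_induct)
  case (less x)
  show ?case
  proof (cases "3 dvd x")
    case True
    then obtain y where y: "x = 3 * y" by blast
    with less.prems(2) obtain m q where "y = 3 ^ m * q" "\<not> 3 dvd q"
      using less.IH[of y] by auto
    with y less.prems(1)[of "Suc m" q] show ?thesis by simp
  next
    case False
    with less.prems(1)[of 0 x] show ?thesis by simp
  qed
qed

lemma ternary_decomp_less:
  fixes r :: nat
  assumes "0 < r" "r < 3 ^ n"
  obtains m q where "r = 3 ^ m * q" "\<not> 3 dvd q" "m < n"
proof -
  obtain m q where r: "r = 3 ^ m * q" "\<not> 3 dvd q"
    using ternary_decomp assms(1) by blast
  then have "(3::nat) ^ m \<le> r"
    by (metis dvd_imp_le dvd_triv_left assms(1))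
  with assms(2) have "m < n"
    by (metis le_less_trans nat_power_less_imp_less zero_less_numeral)
  with r that show ?thesis by blast
qed

lemma last_ternary_digit_scale:
  assumes "j \<noteq> 0"
  shows "last_ternary_digit (3 ^ n * j) = last_ternary_digit j"
proof -
  obtain m q where j: "j = 3 ^ m * q" "\<not> 3 dvd q"
    using ternary_decomp assms by blast
  then have "3 ^ n * j = 3 ^ (n + m) * q"
    by (simp add: power_add)
  with j show ?thesis
    by (metis last_ternary_digit_power_mult)
qed

lemma last_ternary_digit_periodic:
  assumes "0 < r" "r < 3 ^ n"
  shows "last_ternary_digit (3 ^ n * j + r) = last_ternary_digit r"
proof -
  obtain m q where r: "r = 3 ^ m * q" "\<not> 3 dvd q" "m < n"
    using ternary_decomp_less assms by blast
  then obtain t where t: "(3::nat) ^ (n - m) = 3 * t"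
    by (metis Suc_diff_Suc power_Suc)
  have "3 ^ n * j + r = 3 ^ m * (3 ^ (n - m) * j + q)"
    using r by (simp add: algebra_simps flip: power_add)
  moreover have digit: "(3 ^ (n - m) * j + q) mod 3 = q mod 3"
    unfolding t by (simp add: mult.assoc)
  moreover from digit r(2) have "\<not> 3 dvd (3 ^ (n - m) * j + q)"
    by (simp add: dvd_eq_mod_eq_0)
  ultimately show ?thesis
    using r by (simp add: last_ternary_digit_power_mult)
qed

lemma last_ternary_digit_reflect:
  assumes "0 < r" "r < 3 ^ n"
  shows "last_ternary_digit (3 ^ n - r) + last_ternary_digit r = 3"
proof -
  obtain m q where r: "r = 3 ^ m * q" "\<not> 3 dvd q" "m < n"
    using ternary_decomp_less assms by blast
  then obtain t where t: "(3::nat) ^ (n - m) = 3 * t"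
    by (metis Suc_diff_Suc power_Suc)
  have split: "(3::nat) ^ n = 3 ^ m * 3 ^ (n - m)"
    using r by (simp flip: power_add)
  then have "q < 3 * t"
    using assms r t by simp
  moreover have "q mod 3 = 1 \<or> q mod 3 = 2"
    using r(2) by (auto simp: dvd_eq_mod_eq_0)
  moreover from \<open>q < 3 * t\<close> have "q div 3 < t"
    by (simp add: less_mult_imp_div_less mult.commute)
  ultimately have "3 * t - q = 3 * (t - Suc (q div 3)) + (3 - q mod 3)"
    using div_mult_mod_eq[of q 3] by linarith
  then have "(3 * t - q) mod 3 = (3 - q mod 3) mod 3"
    by (simp only: mod_mult_self4)
  also have "\<dots> = 3 - q mod 3"
    using \<open>q mod 3 = 1 \<or> q mod 3 = 2\<close> by auto
  finally have digit: "(3 * t - q) mod 3 = 3 - q mod 3" .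
  moreover have "3 ^ n - r = 3 ^ m * (3 * t - q)"
    using r split t by (simp add: diff_mult_distrib2)
  moreover have "\<not> 3 dvd (3 * t - q)"
    using digit r(2) by (auto simp: dvd_eq_mod_eq_0)
  ultimately show ?thesis
    using r digit by (simp add: last_ternary_digit_power_mult)
qed

lemma pleft_eq: "pleft p x = (if last_ternary_digit x = 1 then 1 - p else p)"
  by (simp add: pleft_def last_ternary_digit_def)

lemma pright_eq: "pright p x = 1 - pleft p x"
  by (simp add: pleft_def pright_def)

lemma pright_pos: "0 < p \<Longrightarrow> p < 1 \<Longrightarrow> 0 < pright p x"
  by (simp add: pright_def)

lemma pleft_scale: "j \<noteq> 0 \<Longrightarrow> pleft p (3 ^ n * j) = pleft p j"
  by (simp add: pleft_eq last_ternary_digit_scale)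

lemma pleft_periodic: "0 < r \<Longrightarrow> r < 3 ^ n \<Longrightarrow> pleft p (3 ^ n * j + r) = pleft p r"
  by (simp add: pleft_eq last_ternary_digit_periodic)

lemma pleft_reflect:
  assumes "0 < r" "r < 3 ^ n"
  shows "pleft p (3 ^ n - r) = pright p r"
proof -
  have "last_ternary_digit (3 ^ n - r) = 1 \<longleftrightarrow> last_ternary_digit r \<noteq> 1"
    using last_ternary_digit_reflect[OF assms] unfolding last_ternary_digit_def by auto
  then show ?thesis
    by (simp add: pright_eq pleft_eq)
qed

lemma cos_rational_periodic:
  assumes "0 < N"
  shows "cos (2 * pi * (real k / real N) * real (N * j + r))
    = cos (2 * pi * (real k / real N) * real r)"
proof -
  have "2 * pi * (real k / real N) * real (N * j + r)
      = 2 * pi * (real k / real N) * real r + real (k * j) * (2 * pi)"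
    using assms by (simp add: field_simps)
  then show ?thesis
    using cos.plus_of_nat[of "2 * pi * (real k / real N) * real r" "k * j"] by simp
qed

lemma cos_rational_reflect:
  assumes "0 < N" "r \<le> N"
  shows "cos (2 * pi * (real k / real N) * real (N - r))
    = cos (2 * pi * (real k / real N) * real r)"
proof -
  have "2 * pi * (real k / real N) * real (N - r)
      = - (2 * pi * (real k / real N) * real r) + real k * (2 * pi)"
    using assms by (simp add: field_simps of_nat_diff)
  then show ?thesis
    using cos.plus_of_nat[of "- (2 * pi * (real k / real N) * real r)" k] by simp
qed

lemma Hmat_eq_tridiag:
  "Hmat p \<beta> \<alpha> \<theta> l = tridiag_mat (3 ^ l)
    (\<lambda>x. complex_of_real (\<beta> * cos (2 * pi * \<alpha> * real x + \<theta>)))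
    (\<lambda>x. complex_of_real (pleft p x)) (\<lambda>x. complex_of_real (pright p x))"
  by (rule eq_matI) (auto simp: Hmat_def tridiag_mat_def tridiag_op_def)

lemma Lapmat_eq_tridiag:
  "Lapmat p j = tridiag_mat (3 ^ j) (\<lambda>_. 1)
    (\<lambda>x. complex_of_real (pleft p x)) (\<lambda>x. complex_of_real (pright p x))"
  by (rule eq_matI) (auto simp: Lapmat_def tridiag_mat_def tridiag_op_def)

lemma Umat_eq_embed:
  assumes "n \<le> l"
  shows "Umat l n = embed_mat (3 ^ n) (3 ^ (l - n))"
proof -
  have "3 ^ n * 3 ^ (l - n) = (3::nat) ^ l"
    using assms by (simp flip: power_add)
  then show ?thesis
    by (simp add: Umat_def embed_mat_def of_bool_def)
qed

lemma self_similar_chain_V_l: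
  assumes "0 < p" "p < 1"
  shows "self_similar_chain (3 ^ n) (3 ^ (l - n))
    (\<lambda>x. complex_of_real (\<beta> * cos (2 * pi * (real k / 3 ^ n) * real x)))
    (\<lambda>x. complex_of_real (pleft p x)) (\<lambda>x. complex_of_real (pright p x))"
  using assms cos_rational_periodic[of "3 ^ n" k] cos_rational_reflect[of "3 ^ n" _ k]
    pright_pos[OF assms, THEN less_imp_neq]
  by unfold_locales (auto simp: pleft_periodic pleft_scale pleft_reflect pright_eq)

theorem lemma3p4:
  fixes p \<beta> :: real and l n k :: nat
  assumes "0 < p" "p < 1" "1 \<le> l" "1 \<le> n" "n \<le> l" "k < 3 ^ n"
  shows "\<exists>\<phi> \<psi>. spectrally_similar (Hmat p \<beta> (real k / 3 ^ n) 0 l) (Lapmat p (l - n))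
            (Umat l n) \<phi> \<psi>"
proof -
  interpret self_similar_chain "3 ^ n" "3 ^ (l - n)"
      "\<lambda>x. complex_of_real (\<beta> * cos (2 * pi * (real k / 3 ^ n) * real x))"
      "\<lambda>x. complex_of_real (pleft p x)" "\<lambda>x. complex_of_real (pright p x)"
    using assms(1,2) by (rule self_similar_chain_V_l)
  have "3 ^ n * 3 ^ (l - n) = (3::nat) ^ l"
    using assms(5) by (simp flip: power_add)
  with spectrally_similar_decimation
  have "spectrally_similar (Hmat p \<beta> (real k / 3 ^ n) 0 l) (Lapmat p (l - n)) (Umat l n) \<phi> \<psi>"
    by (simp add: Hmat_eq_tridiag Lapmat_eq_tridiag Umat_eq_embed[OF assms(5)])
  then show ?thesis
    by blast
qed

end
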